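(* Let $\rho > 0$ and $A \in L(H)$. Then the following are equivalent: (i) $\tau - A$ has an inverse $(\tau - A)^{-1} \in L(\ell_{2,\rho}(\mathbb{Z}; H))$ and this inverse is causal; (ii) $(\tau - A)^{-1} \in L(\ell_{2,\rho}(\mathbb{Z}; H))$ and $\operatorname{spt} (\tau - A)^{-1} \delta_{-1} x \subseteq \mathbb{Z}_{\geq 0}$ for all $x \in H$; (iii) $\rho > r(A)$.
   Context: $H$ is a separable complex Hilbert space, $L(X)$ denotes bounded linear operators on $X$. $\ell_{2,\rho}(\mathbb{Z}; H) = \{x \in H^{\mathbb{Z}} : \sum_{k} |x_k|_H^2 \rho^{-2k} < \infty\}$ with norm $(\sum_k|x_k|_H^2\rho^{-2k})^{1/2}$. $\tau$ is the shift $(\tau x)_k = x_{k+1}$, and $A$ also denotes the operator $x\mapsto (Ax_k)_{k\in\mathbb{Z}}$ on $\ell_{2,\rho}(\mathbb{Z};H)$. $\operatorname{spt} x = \{k : x_k \neq 0\}$; $\delta_{-1}x\in H^{\mathbb{Z}}$ is the sequence with entry $x$ at index $-1$ and $0$ elsewhere. $r(A) = \sup\{|z| : z\in\sigma(A)\}$ is the spectral radius. A linear operator $B$ on $\ell_{2,\rho}(\mathbb{Z};H)$ is causal if for all $a\in\mathbb{Z}$ and $f\in\ell_{2,\rho}(\mathbb{Z};H)$, $\operatorname{spt} f\subseteq\mathbb{Z}_{\geq a}$ implies $\operatorname{spt} Bf\subseteq\mathbb{Z}_{\geq a}$. *)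

theory Defs
  imports "HOL-Analysis.Analysis"
begin

text \<open>A complex Hilbert space is modelled as a Banach space type 'a (real structure from the
  library) together with a complex scalar multiplication sc extending the real one and a
  complex inner product ip (linear in the second, conjugate-linear in the first argument)
  inducing the norm.\<close>

definition complex_hilbert :: "(complex \<Rightarrow> 'a::banach \<Rightarrow> 'a) \<Rightarrow> ('a \<Rightarrow> 'a \<Rightarrow> complex) \<Rightarrow> bool" where
  "complex_hilbert sc ip \<longleftrightarrow>
     (\<forall>c x y. sc c (x + y) = sc c x + sc c y) \<and>
     (\<forall>c d x. sc (c + d) x = sc c x + sc d x) \<and>
     (\<forall>c d x. sc c (sc d x) = sc (c * d) x) \<and>
     (\<forall>x. sc 1 x = x) \<and>
     (\<forall>r x. sc (complex_of_real r) x = r *\<^sub>R x) \<and>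
     (\<forall>x y. ip x y = cnj (ip y x)) \<and>
     (\<forall>x y z. ip x (y + z) = ip x y + ip x z) \<and>
     (\<forall>c x y. ip x (sc c y) = c * ip x y) \<and>
     (\<forall>x. 0 \<le> Re (ip x x)) \<and>
     (\<forall>x. norm x = sqrt (Re (ip x x)))"

definition separable_space :: "'a::topological_space itself \<Rightarrow> bool" where
  "separable_space _ \<longleftrightarrow> (\<exists>D::'a set. countable D \<and> closure D = UNIV)"

definition bounded_clinear_op :: "(complex \<Rightarrow> 'a::banach \<Rightarrow> 'a) \<Rightarrow> ('a \<Rightarrow> 'a) \<Rightarrow> bool" where
  "bounded_clinear_op sc T \<longleftrightarrow> bounded_linear T \<and> (\<forall>c x. T (sc c x) = sc c (T x))"

definition op_spectrum :: "(complex \<Rightarrow> 'a::banach \<Rightarrow> 'a) \<Rightarrow> ('a \<Rightarrow> 'a) \<Rightarrow> complex set" where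
  "op_spectrum sc A = {z. \<not> (\<exists>B. bounded_clinear_op sc B \<and>
        (\<forall>x. B (sc z x - A x) = x) \<and> (\<forall>x. sc z (B x) - A (B x) = x))}"

text \<open>Spectral radius, as an extended real (equal to -infinity for an empty spectrum).\<close>
definition spectral_radius :: "(complex \<Rightarrow> 'a::banach \<Rightarrow> 'a) \<Rightarrow> ('a \<Rightarrow> 'a) \<Rightarrow> ereal" where
  "spectral_radius sc A = Sup ((\<lambda>z. ereal (cmod z)) ` op_spectrum sc A)"

definition l2rho :: "real \<Rightarrow> (int \<Rightarrow> 'a::real_normed_vector) set" where
  "l2rho \<rho> = {x. (\<lambda>k. (norm (x k))\<^sup>2 * \<rho> powi (-2 * k)) summable_on UNIV}"

definition l2rho_norm :: "real \<Rightarrow> (int \<Rightarrow> 'a::real_normed_vector) \<Rightarrow> real" where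
  "l2rho_norm \<rho> x = sqrt (\<Sum>\<^sub>\<infinity>k. (norm (x k))\<^sup>2 * \<rho> powi (-2 * k))"

definition bounded_op_l2rho :: "real \<Rightarrow> (complex \<Rightarrow> 'a::banach \<Rightarrow> 'a) \<Rightarrow>
    ((int \<Rightarrow> 'a) \<Rightarrow> (int \<Rightarrow> 'a)) \<Rightarrow> bool" where
  "bounded_op_l2rho \<rho> sc B \<longleftrightarrow>
     (\<forall>x\<in>l2rho \<rho>. B x \<in> l2rho \<rho>) \<and>
     (\<forall>x\<in>l2rho \<rho>. \<forall>y\<in>l2rho \<rho>. B (\<lambda>k. x k + y k) = (\<lambda>k. B x k + B y k)) \<and>
     (\<forall>c. \<forall>x\<in>l2rho \<rho>. B (\<lambda>k. sc c (x k)) = (\<lambda>k. sc c (B x k))) \<and>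
     (\<exists>C. \<forall>x\<in>l2rho \<rho>. l2rho_norm \<rho> (B x) \<le> C * l2rho_norm \<rho> x)"

definition shift_minus :: "('a::ab_group_add \<Rightarrow> 'a) \<Rightarrow> (int \<Rightarrow> 'a) \<Rightarrow> (int \<Rightarrow> 'a)" where
  "shift_minus A x = (\<lambda>k. x (k + 1) - A (x k))"

definition is_inverse_l2rho :: "real \<Rightarrow> ('a::real_normed_vector \<Rightarrow> 'a) \<Rightarrow> ((int \<Rightarrow> 'a) \<Rightarrow> (int \<Rightarrow> 'a)) \<Rightarrow> bool" where
  "is_inverse_l2rho \<rho> A B \<longleftrightarrow>
     (\<forall>x\<in>l2rho \<rho>. B (shift_minus A x) = x \<and> shift_minus A (B x) = x)"

definition spt :: "(int \<Rightarrow> 'a::zero) \<Rightarrow> int set" where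
  "spt x = {k. x k \<noteq> 0}"

definition delta_m1 :: "'a::zero \<Rightarrow> int \<Rightarrow> 'a" where
  "delta_m1 x = (\<lambda>k. if k = -1 then x else 0)"

definition causal_l2rho :: "real \<Rightarrow> ((int \<Rightarrow> 'a::real_normed_vector) \<Rightarrow> (int \<Rightarrow> 'a)) \<Rightarrow> bool" where
  "causal_l2rho \<rho> B \<longleftrightarrow>
     (\<forall>a. \<forall>f\<in>l2rho \<rho>. spt f \<subseteq> {a..} \<longrightarrow> spt (B f) \<subseteq> {a..})"

end

theory Submission
  imports Defs "HOL-Complex_Analysis.Complex_Analysis"
begin

text \<open>
  All three conditions are equivalent to a growth bound \<open>norm ((A ^^ n) x) \<le> M * s ^ n * norm x\<close>
  with \<open>s < \<rho>\<close>.
  Such a bound gives the spectral bound by Neumann series; conversely, if \<open>r(A) < s\<close>, then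
  \<open>w \<mapsto> ip v ((1 - w A)\<^sup>-\<^sup>1 x)\<close> is holomorphic on \<open>norm w < 1 / r(A)\<close> with Taylor
  coefficients \<open>ip v ((A ^^ n) x)\<close>, and Cauchy's estimate on the circle of radius \<open>1 / s\<close>
  with \<open>v = (A ^^ n) x\<close> gives the bound.
  Under the bound, \<open>f \<mapsto> (\<lambda>k. \<Sum>j. (A ^^ j) (f (k - 1 - j)))\<close> is a causal inverse of
  \<open>\<tau> - A\<close>, bounded on \<open>l2rho \<rho>\<close> because it is a convolution with a kernel
  decaying like \<open>(s / \<rho>) ^ j\<close>.
  A causal inverse maps \<open>\<delta>\<^sub>-\<^sub>1 x\<close> to the orbit \<open>(A ^^ n) x\<close> on \<open>n \<ge> 0\<close>, so
  boundedness makes the weighted orbits square summable, uniformly in \<open>x\<close>, and Datko's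
  argument turns this into the growth bound.
\<close>

lemma summable_geometric_majorant:
  fixes f :: "nat \<Rightarrow> 'a::banach"
  assumes "\<And>k. norm (f k) \<le> C * q ^ k" "0 \<le> q" "q < 1"
  shows "summable f" "norm (suminf f) \<le> C / (1 - q)"
proof -
  have g: "summable (\<lambda>k. C * q ^ k)"
    using assms by (intro summable_mult summable_geometric) simp
  show "summable f"
    by (rule summable_comparison_test'[OF g]) (use assms in auto)
  have n: "summable (\<lambda>k. norm (f k))"
    by (rule summable_comparison_test'[OF g]) (use assms in auto)
  have "norm (suminf f) \<le> (\<Sum>k. norm (f k))" by (rule summable_norm[OF n])
  also have "\<dots> \<le> (\<Sum>k. C * q ^ k)" by (rule suminf_le) (use assms n g in auto)
  also have "\<dots> = C / (1 - q)" using assms by (simp add: suminf_mult suminf_geometric divide_simps)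
  finally show "norm (suminf f) \<le> C / (1 - q)" .
qed

lemma suminf_mult_square_le:
  fixes w b :: "nat \<Rightarrow> real"
  assumes w: "\<And>j. 0 \<le> w j" and summable: "summable w" "summable (\<lambda>j. w j * b j)" "summable (\<lambda>j. w j * (b j)\<^sup>2)"
  shows "(\<Sum>j. w j * b j)\<^sup>2 \<le> (\<Sum>j. w j) * (\<Sum>j. w j * (b j)\<^sup>2)"
proof (rule LIMSEQ_le)
  show "(\<lambda>n. (\<Sum>j<n. w j * b j)\<^sup>2) \<longlonglongrightarrow> (\<Sum>j. w j * b j)\<^sup>2"
    by (intro tendsto_power summable_LIMSEQ summable)
  show "(\<lambda>n. (\<Sum>j<n. w j) * (\<Sum>j<n. w j * (b j)\<^sup>2)) \<longlonglongrightarrow> (\<Sum>j. w j) * (\<Sum>j. w j * (b j)\<^sup>2)"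
    by (intro tendsto_mult summable_LIMSEQ summable)
  show "\<exists>N. \<forall>n\<ge>N. (\<Sum>j<n. w j * b j)\<^sup>2 \<le> (\<Sum>j<n. w j) * (\<Sum>j<n. w j * (b j)\<^sup>2)"
  proof (intro exI allI impI)
    fix n
    have "(\<Sum>j<n. sqrt (w j) * (sqrt (w j) * b j))\<^sup>2 \<le> (\<Sum>j<n. (sqrt (w j))\<^sup>2) * (\<Sum>j<n. (sqrt (w j) * b j)\<^sup>2)"
      by (rule Cauchy_Schwarz_ineq_sum)
    then show "(\<Sum>j<n. w j * b j)\<^sup>2 \<le> (\<Sum>j<n. w j) * (\<Sum>j<n. w j * (b j)\<^sup>2)"
      using w by (simp add: power_mult_distrib flip: mult.assoc)
  qed
qed

lemma geometric_convolution_sum_square_le: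
  fixes g :: "int \<Rightarrow> real"
  assumes q: "0 \<le> q" "q < 1" and g: "\<And>m. 0 \<le> g m"
    and G: "\<And>F. finite F \<Longrightarrow> (\<Sum>m\<in>F. (g m)\<^sup>2) \<le> G" and F: "finite F"
  shows "(\<Sum>k\<in>F. (\<Sum>j. q ^ j * g (k - int j))\<^sup>2) \<le> G / (1 - q)\<^sup>2"
proof -
  have g_sq: "(g m)\<^sup>2 \<le> G" for m using G[of "{m}"] by simp
  have shifted: "(\<Sum>k\<in>F. (g (k - int j))\<^sup>2) \<le> G" for j
    using G[of "(\<lambda>k. k - int j) ` F"] F by (simp add: sum.reindex inj_on_def)
  have summable1: "summable (\<lambda>j. q ^ j * g (k - int j))" for k
  proof (rule summable_geometric_majorant(1)[OF _ q])
    show "norm (q ^ j * g (k - int j)) \<le> sqrt G * q ^ j" for j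
      using g[of "k - int j"] q real_le_rsqrt[OF g_sq]
      by (simp add: abs_mult mult.commute[of "q ^ j"] mult_right_mono)
  qed
  have summable2: "summable (\<lambda>j. q ^ j * (g (k - int j))\<^sup>2)" for k
    by (rule summable_geometric_majorant(1)[where C = G, OF _ q])
      (use q g_sq in \<open>simp add: mult.commute[of "q ^ _"] mult_right_mono\<close>)
  have "(\<Sum>k\<in>F. (\<Sum>j. q ^ j * g (k - int j))\<^sup>2) \<le> (\<Sum>k\<in>F. 1 / (1 - q) * (\<Sum>j. q ^ j * (g (k - int j))\<^sup>2))"
  proof (rule sum_mono)
    fix k
    have "(\<Sum>j. q ^ j * g (k - int j))\<^sup>2 \<le> (\<Sum>j. q ^ j) * (\<Sum>j. q ^ j * (g (k - int j))\<^sup>2)"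
      using q by (intro suminf_mult_square_le summable1 summable2) auto
    then show "(\<Sum>j. q ^ j * g (k - int j))\<^sup>2 \<le> 1 / (1 - q) * (\<Sum>j. q ^ j * (g (k - int j))\<^sup>2)"
      using q by (simp add: suminf_geometric)
  qed
  also have "\<dots> = 1 / (1 - q) * (\<Sum>j. q ^ j * (\<Sum>k\<in>F. (g (k - int j))\<^sup>2))"
    by (simp add: sum_distrib_left suminf_sum[OF summable2])
  also have "\<dots> \<le> 1 / (1 - q) * (\<Sum>j. q ^ j * G)"
  proof (intro mult_left_mono suminf_le allI)
    show "summable (\<lambda>j. q ^ j * (\<Sum>k\<in>F. (g (k - int j))\<^sup>2))"
    proof -
      have "summable (\<lambda>j. \<Sum>k\<in>F. q ^ j * (g (k - int j))\<^sup>2)"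
        by (rule summable_sum) (rule summable2)
      then show ?thesis by (simp add: sum_distrib_left)
    qed
    show "summable (\<lambda>j. q ^ j * G)" using q by (intro summable_mult2 summable_geometric) simp
  qed (use q shifted in \<open>auto intro: mult_left_mono\<close>)
  also have "\<dots> = G / (1 - q)\<^sup>2"
    using q by (simp add: suminf_mult2[symmetric] suminf_geometric power2_eq_square)
  finally show ?thesis .
qed

lemma cnj_mult_self: "cnj c * c = complex_of_real ((cmod c)\<^sup>2)"
  by (metis complex_norm_square mult.commute of_real_power)

lemma abs_onorm_diff_le:
  assumes f: "bounded_linear f" and g: "bounded_linear g"
  shows "\<bar>onorm f - onorm g\<bar> \<le> onorm (\<lambda>x. f x - g x)"
proof -
  have "onorm f \<le> onorm g + onorm (\<lambda>x. f x - g x)"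
    using onorm_triangle[OF g bounded_linear_sub[OF f g]] by simp
  moreover have "onorm g \<le> onorm f + onorm (\<lambda>x. f x - g x)"
  proof -
    have "(\<lambda>x. g x - f x) = (\<lambda>x. - (f x - g x))" by auto
    then show ?thesis
      using onorm_triangle[OF f bounded_linear_sub[OF g f]] onorm_neg[of "\<lambda>x. f x - g x"] by simp
  qed
  ultimately show ?thesis by linarith
qed

lemma funpow_bound_of_contraction:
  fixes T :: "'a::real_normed_vector \<Rightarrow> 'a"
  assumes \<rho>: "0 < \<rho>" and N: "0 < N" and L: "0 \<le> L"
    and bound: "\<And>k x. norm ((T ^^ k) x) \<le> L * \<rho> ^ k * norm x"
    and contraction: "\<And>x. norm ((T ^^ N) x) \<le> 1/2 * \<rho> ^ N * norm x"
  shows "\<exists>s. 0 \<le> s \<and> s < \<rho> \<and> (\<forall>k x. norm ((T ^^ k) x) \<le> 2 * L * s ^ k * norm x)"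
proof (intro exI conjI allI)
  define c where "c = root N (1/2)"
  have c: "0 < c" "c < 1" "c ^ N = 1/2" using N by (auto simp: c_def real_root_gt_zero)
  show "0 \<le> \<rho> * c" "\<rho> * c < \<rho>" using \<rho> c by auto
  have blocks: "norm ((T ^^ (N * m)) x) \<le> (1/2) ^ m * \<rho> ^ (N * m) * norm x" for m x
  proof (induction m)
    case (Suc m)
    have "norm ((T ^^ (N * Suc m)) x) = norm ((T ^^ N) ((T ^^ (N * m)) x))"
      by (simp add: funpow_add)
    also have "\<dots> \<le> 1/2 * \<rho> ^ N * norm ((T ^^ (N * m)) x)" by (rule contraction)
    also have "\<dots> \<le> 1/2 * \<rho> ^ N * ((1/2) ^ m * \<rho> ^ (N * m) * norm x)"
      by (rule mult_left_mono[OF Suc]) (use \<rho> in simp)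
    finally show ?case by (simp add: power_add mult_ac)
  qed simp
  fix k x
  define m where "m = k div N"
  define r where "r = k mod N"
  have k: "k = r + N * m" and r: "r < N" using N by (auto simp: m_def r_def)
  have "norm ((T ^^ k) x) = norm ((T ^^ r) ((T ^^ (N * m)) x))"
    by (simp add: k funpow_add)
  also have "\<dots> \<le> L * \<rho> ^ r * norm ((T ^^ (N * m)) x)" by (rule bound)
  also have "\<dots> \<le> L * \<rho> ^ r * ((1/2) ^ m * \<rho> ^ (N * m) * norm x)"
    by (rule mult_left_mono[OF blocks]) (use \<rho> L in simp)
  also have "\<dots> = L * \<rho> ^ k * (1/2) ^ m * norm x" by (simp add: k power_add mult_ac)
  also have "\<dots> \<le> L * \<rho> ^ k * (2 * c ^ k) * norm x"
  proof -
    have "c ^ N \<le> c ^ r" using r c by (intro power_decreasing) auto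
    moreover have "c ^ k = (1/2) ^ m * c ^ r" by (simp add: k power_add power_mult c(3) mult.commute)
    ultimately have "(1/2) ^ m \<le> 2 * c ^ k" by (simp add: c(3))
    then show ?thesis using \<rho> L by (intro mult_left_mono mult_right_mono) auto
  qed
  finally show "norm ((T ^^ k) x) \<le> 2 * L * (\<rho> * c) ^ k * norm x"
    by (simp add: power_mult_distrib mult_ac)
qed

lemma funpow_le_of_square_summable_orbits:
  fixes T :: "'a::real_normed_vector \<Rightarrow> 'a"
  assumes \<rho>: "0 < \<rho>" and K: "0 \<le> K"
    and sums: "\<And>N x. (\<Sum>n<N. (norm ((T ^^ n) x) / \<rho> ^ n)\<^sup>2) \<le> K * (norm x)\<^sup>2"
  shows "norm ((T ^^ n) x) \<le> sqrt K * \<rho> ^ n * norm x"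
proof -
  have "(norm ((T ^^ n) x) / \<rho> ^ n)\<^sup>2 \<le> (\<Sum>k<Suc n. (norm ((T ^^ k) x) / \<rho> ^ k)\<^sup>2)"
    by (rule member_le_sum) auto
  also have "\<dots> \<le> (sqrt K * norm x)\<^sup>2"
    using sums[where N = "Suc n" and x = x] K by (simp add: power_mult_distrib)
  finally have "norm ((T ^^ n) x) / \<rho> ^ n \<le> sqrt K * norm x"
    by (rule power2_le_imp_le) (use K in simp)
  then show ?thesis using \<rho> by (simp add: divide_simps mult_ac)
qed

lemma funpow_contraction_of_square_summable_orbits:
  fixes T :: "'a::real_normed_vector \<Rightarrow> 'a"
  assumes \<rho>: "0 < \<rho>" and K: "0 \<le> K"
    and sums: "\<And>N x. (\<Sum>n<N. (norm ((T ^^ n) x) / \<rho> ^ n)\<^sup>2) \<le> K * (norm x)\<^sup>2"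
  obtains N where "0 < N" "\<And>x. norm ((T ^^ N) x) \<le> 1/2 * \<rho> ^ N * norm x"
proof -
  define b where "b x n = (norm ((T ^^ n) x) / \<rho> ^ n)\<^sup>2" for x n
  note bound = funpow_le_of_square_summable_orbits[OF \<rho> K sums]
  \<comment> \<open>Datko's argument: \<open>b x\<close> decreases up to the factor \<open>K\<close>, so \<open>n * b x n \<le> K * (\<Sum>k<n. b x k) \<le> K\<^sup>2 * (norm x)\<^sup>2\<close>\<close>
  have later_le: "b x n \<le> K * b x k" if "k \<le> n" for x n k
  proof -
    have "norm ((T ^^ n) x) = norm ((T ^^ (n - k)) ((T ^^ k) x))"
      using that by (metis comp_apply funpow_add le_add_diff_inverse2)
    also have "\<dots> \<le> sqrt K * \<rho> ^ (n - k) * norm ((T ^^ k) x)" by (rule bound)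
    finally have "norm ((T ^^ n) x) / \<rho> ^ n \<le> sqrt K * (norm ((T ^^ k) x) / \<rho> ^ k)"
      using \<rho> that by (simp add: divide_simps power_diff mult_ac)
    then have "(norm ((T ^^ n) x) / \<rho> ^ n)\<^sup>2 \<le> (sqrt K * (norm ((T ^^ k) x) / \<rho> ^ k))\<^sup>2"
      by (rule power_mono) (use \<rho> in simp)
    also have "\<dots> = K * (norm ((T ^^ k) x) / \<rho> ^ k)\<^sup>2"
      unfolding power_mult_distrib[of "sqrt K"] using K by simp
    finally show ?thesis unfolding b_def .
  qed
  have averaged: "real n * b x n \<le> K\<^sup>2 * (norm x)\<^sup>2" for n x
  proof -
    have "real n * b x n = (\<Sum>k<n. b x n)" by simp
    also have "\<dots> \<le> (\<Sum>k<n. K * b x k)" by (intro sum_mono later_le) simp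
    also have "\<dots> \<le> K * (K * (norm x)\<^sup>2)"
      using sums[where N = n and x = x] K unfolding b_def by (simp add: mult_left_mono flip: sum_distrib_left)
    finally show ?thesis by (simp add: power2_eq_square mult_ac)
  qed
  define N where "N = nat \<lceil>4 * K\<^sup>2\<rceil> + 1"
  have N: "0 < N" "4 * K\<^sup>2 < real N" unfolding N_def by auto linarith
  have "norm ((T ^^ N) x) \<le> 1/2 * \<rho> ^ N * norm x" for x
  proof -
    have "real N * b x N \<le> K\<^sup>2 * (norm x)\<^sup>2" by (rule averaged)
    also have "\<dots> \<le> real N / 4 * (norm x)\<^sup>2" by (rule mult_right_mono) (use N in auto)
    finally have "real N * b x N \<le> real N / 4 * (norm x)\<^sup>2" .
    then have "b x N \<le> (norm x / 2)\<^sup>2" using N by (simp add: power_divide field_simps)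
    then have "norm ((T ^^ N) x) / \<rho> ^ N \<le> norm x / 2"
      unfolding b_def by (rule power2_le_imp_le) simp
    then show ?thesis using \<rho> by (simp add: divide_simps mult_ac)
  qed
  with N(1) show ?thesis by (rule that)
qed

lemma funpow_bound_of_square_summable_orbits:
  fixes T :: "'a::real_normed_vector \<Rightarrow> 'a"
  assumes \<rho>: "0 < \<rho>" and K: "0 \<le> K"
    and sums: "\<And>N x. (\<Sum>n<N. (norm ((T ^^ n) x) / \<rho> ^ n)\<^sup>2) \<le> K * (norm x)\<^sup>2"
  shows "\<exists>M s. 0 \<le> s \<and> s < \<rho> \<and> (\<forall>n x. norm ((T ^^ n) x) \<le> M * s ^ n * norm x)"
proof -
  obtain N where "0 < N" "\<And>x. norm ((T ^^ N) x) \<le> 1/2 * \<rho> ^ N * norm x"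
    using funpow_contraction_of_square_summable_orbits[OF \<rho> K sums] by blast
  from funpow_bound_of_contraction[OF \<rho> this(1) real_sqrt_ge_zero[OF K]
      funpow_le_of_square_summable_orbits[OF \<rho> K sums] this(2)]
  obtain s where s: "0 \<le> s" "s < \<rho>" "\<And>n x. norm ((T ^^ n) x) \<le> 2 * sqrt K * s ^ n * norm x"
    by blast
  show ?thesis by (intro exI[of _ "2 * sqrt K"] exI[of _ s] conjI allI) (fact s)+
qed

definition weighted_norm :: "real \<Rightarrow> (int \<Rightarrow> 'a::real_normed_vector) \<Rightarrow> int \<Rightarrow> real" where
  "weighted_norm \<rho> f k = norm (f k) * \<rho> powr (- real_of_int k)"

lemma l2rho_weighted_norm:
  assumes "0 < \<rho>"
  shows "f \<in> l2rho \<rho> \<longleftrightarrow> (\<lambda>k. (weighted_norm \<rho> f k)\<^sup>2) summable_on UNIV"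
    and "l2rho_norm \<rho> f = sqrt (\<Sum>\<^sub>\<infinity>k. (weighted_norm \<rho> f k)\<^sup>2)"
proof -
  have "\<rho> powi (-2 * k) = \<rho> powr (- real_of_int k) * \<rho> powr (- real_of_int k)" for k
  proof -
    have "\<rho> powi (-2 * k) = \<rho> powr real_of_int (-2 * k)"
      using assms by (subst powr_real_of_int') auto
    then show ?thesis by (simp flip: powr_add)
  qed
  then have summand: "(norm (f k))\<^sup>2 * \<rho> powi (-2 * k) = (weighted_norm \<rho> f k)\<^sup>2" for k
    by (simp add: weighted_norm_def power2_eq_square mult_ac)
  show "f \<in> l2rho \<rho> \<longleftrightarrow> (\<lambda>k. (weighted_norm \<rho> f k)\<^sup>2) summable_on UNIV"
    unfolding l2rho_def mem_Collect_eq summand ..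
  show "l2rho_norm \<rho> f = sqrt (\<Sum>\<^sub>\<infinity>k. (weighted_norm \<rho> f k)\<^sup>2)"
    unfolding l2rho_norm_def summand ..
qed

lemma l2rho_norm_nonneg:
  assumes "0 < \<rho>"
  shows "0 \<le> l2rho_norm \<rho> f"
  unfolding l2rho_weighted_norm(2)[OF assms] by (intro real_sqrt_ge_zero infsum_nonneg) simp

lemma sum_weighted_norm_le_l2rho_norm:
  assumes "0 < \<rho>" "f \<in> l2rho \<rho>" "finite F"
  shows "(\<Sum>k\<in>F. (weighted_norm \<rho> f k)\<^sup>2) \<le> (l2rho_norm \<rho> f)\<^sup>2"
proof -
  have "(\<Sum>k\<in>F. (weighted_norm \<rho> f k)\<^sup>2) \<le> (\<Sum>\<^sub>\<infinity>k. (weighted_norm \<rho> f k)\<^sup>2)"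
    using assms by (intro finite_sum_le_infsum) (simp_all add: l2rho_weighted_norm(1))
  also have "\<dots> = (l2rho_norm \<rho> f)\<^sup>2"
    unfolding l2rho_weighted_norm(2)[OF assms(1)] by (simp add: infsum_nonneg)
  finally show ?thesis .
qed

lemma weighted_norm_le_l2rho_norm:
  assumes "0 < \<rho>" "f \<in> l2rho \<rho>"
  shows "weighted_norm \<rho> f k \<le> l2rho_norm \<rho> f"
proof (rule power2_le_imp_le)
  show "(weighted_norm \<rho> f k)\<^sup>2 \<le> (l2rho_norm \<rho> f)\<^sup>2"
    using sum_weighted_norm_le_l2rho_norm[OF assms, of "{k}"] by simp
qed (rule l2rho_norm_nonneg[OF assms(1)])

lemma norm_eq_weighted_norm:
  assumes "0 < \<rho>"
  shows "norm (f k) = weighted_norm \<rho> f k * \<rho> powr real_of_int k"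
  using assms by (simp add: weighted_norm_def powr_minus field_simps)

lemma norm_le_l2rho_norm:
  assumes "0 < \<rho>" "f \<in> l2rho \<rho>"
  shows "norm (f k) \<le> l2rho_norm \<rho> f * \<rho> powr real_of_int k"
proof -
  have "norm (f k) = weighted_norm \<rho> f k * \<rho> powr real_of_int k"
    by (rule norm_eq_weighted_norm[OF assms(1)])
  also have "\<dots> \<le> l2rho_norm \<rho> f * \<rho> powr real_of_int k"
    by (rule mult_right_mono[OF weighted_norm_le_l2rho_norm[OF assms]]) simp
  finally show ?thesis .
qed

lemma l2rho_normI:
  assumes "0 < \<rho>" "0 \<le> K" and sums: "\<And>F. finite F \<Longrightarrow> (\<Sum>k\<in>F. (weighted_norm \<rho> f k)\<^sup>2) \<le> K\<^sup>2"
  shows "f \<in> l2rho \<rho>" "l2rho_norm \<rho> f \<le> K"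
proof -
  have summable_sq: "(\<lambda>k. (weighted_norm \<rho> f k)\<^sup>2) summable_on UNIV"
    using sums by (intro nonneg_bdd_above_summable_on bdd_aboveI) auto
  then show "f \<in> l2rho \<rho>" using assms(1) by (simp add: l2rho_weighted_norm)
  have "(\<Sum>\<^sub>\<infinity>k. (weighted_norm \<rho> f k)\<^sup>2) \<le> K\<^sup>2"
    using summable_sq sums by (intro infsum_le_finite_sums) auto
  then show "l2rho_norm \<rho> f \<le> K"
    unfolding l2rho_weighted_norm(2)[OF assms(1)] using assms(2) by (intro real_le_lsqrt)
qed

lemma delta_m1_l2rho:
  assumes "0 < \<rho>"
  shows "delta_m1 x \<in> l2rho \<rho>" "l2rho_norm \<rho> (delta_m1 x) = norm x * \<rho>"
proof -
  have weighted: "(weighted_norm \<rho> (delta_m1 x) k)\<^sup>2 = (if k = -1 then (norm x * \<rho>)\<^sup>2 else 0)" for k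
    using assms by (simp add: weighted_norm_def delta_m1_def)
  have "(\<Sum>k\<in>F. (weighted_norm \<rho> (delta_m1 x) k)\<^sup>2) \<le> (norm x * \<rho>)\<^sup>2" if "finite F" for F
    using that by (simp add: weighted sum.delta)
  then have l2: "delta_m1 x \<in> l2rho \<rho>" and le: "l2rho_norm \<rho> (delta_m1 x) \<le> norm x * \<rho>"
    using assms l2rho_normI[of \<rho> "norm x * \<rho>"] by auto
  then show "delta_m1 x \<in> l2rho \<rho>" by blast
  have "norm x * \<rho> = weighted_norm \<rho> (delta_m1 x) (-1)"
    using assms by (simp add: weighted_norm_def delta_m1_def)
  also have "\<dots> \<le> l2rho_norm \<rho> (delta_m1 x)"
    by (rule weighted_norm_le_l2rho_norm[OF assms l2])
  finally show "l2rho_norm \<rho> (delta_m1 x) = norm x * \<rho>" using le by simp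
qed

lemma causal_solution_delta_m1_eq_funpow:
  fixes A :: "'a::ab_group_add \<Rightarrow> 'a"
  assumes "A 0 = 0" and inv: "shift_minus A y = delta_m1 x" and past: "\<And>k. k < 0 \<Longrightarrow> y k = 0"
  shows "y (int n) = (A ^^ n) x"
proof (induction n)
  case 0
  have "shift_minus A y (-1) = delta_m1 x (-1)" using inv by simp
  then have "y (-1 + 1) - A (y (-1)) = delta_m1 x (-1)" unfolding shift_minus_def .
  then show ?case using past[of "-1"] \<open>A 0 = 0\<close> by (simp add: delta_m1_def)
next
  case (Suc n)
  have "shift_minus A y (int n) = delta_m1 x (int n)" using inv by simp
  then have "y (int n + 1) - A (y (int n)) = delta_m1 x (int n)" unfolding shift_minus_def .
  then show ?case using Suc by (simp add: delta_m1_def add.commute)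
qed

lemma spt_inverse_delta_m1_if_causal:
  fixes A :: "'a::real_normed_vector \<Rightarrow> 'a"
  assumes \<rho>: "0 < \<rho>" and "A 0 = 0" and inv: "is_inverse_l2rho \<rho> A B" and causal: "causal_l2rho \<rho> B"
  shows "spt (B (delta_m1 x)) \<subseteq> {0..}"
proof -
  define y where "y = B (delta_m1 x)"
  have "spt (delta_m1 x) \<subseteq> {-1..}" by (auto simp: spt_def delta_m1_def)
  then have spt_y: "spt y \<subseteq> {-1..}"
    using causal delta_m1_l2rho(1)[OF \<rho>] unfolding causal_l2rho_def y_def by blast
  have "shift_minus A y = delta_m1 x"
    using inv delta_m1_l2rho(1)[OF \<rho>] unfolding is_inverse_l2rho_def y_def by blast
  then have "shift_minus A y (-2) = delta_m1 x (-2)" by simp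
  then have "y (-2 + 1) - A (y (-2)) = delta_m1 x (-2)" unfolding shift_minus_def .
  moreover have "y (-2) = 0" using spt_y by (auto simp: spt_def)
  ultimately have "y (-1) = 0" using \<open>A 0 = 0\<close> by (simp add: delta_m1_def)
  show ?thesis
    unfolding y_def[symmetric]
  proof
    fix k assume "k \<in> spt y"
    then have "-1 \<le> k" "k \<noteq> -1" using spt_y \<open>y (-1) = 0\<close> by (auto simp: spt_def)
    then show "k \<in> {0..}" by simp
  qed
qed

lemma orbits_square_summable_if_inverse:
  fixes A :: "'a::banach \<Rightarrow> 'a"
  assumes \<rho>: "0 < \<rho>" and "A 0 = 0" and inv: "is_inverse_l2rho \<rho> A B"
    and bounded: "bounded_op_l2rho \<rho> sc B" and spt: "\<forall>x. spt (B (delta_m1 x)) \<subseteq> {0..}"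
  shows "\<exists>K\<ge>0. \<forall>N x. (\<Sum>n<N. (norm ((A ^^ n) x) / \<rho> ^ n)\<^sup>2) \<le> K * (norm x)\<^sup>2"
proof -
  obtain C where C: "\<And>f. f \<in> l2rho \<rho> \<Longrightarrow> l2rho_norm \<rho> (B f) \<le> C * l2rho_norm \<rho> f"
    using bounded unfolding bounded_op_l2rho_def by blast
  have "(\<Sum>n<N. (norm ((A ^^ n) x) / \<rho> ^ n)\<^sup>2) \<le> (C * \<rho>)\<^sup>2 * (norm x)\<^sup>2" for N x
  proof -
    define y where "y = B (delta_m1 x)"
    have y: "y \<in> l2rho \<rho>"
      using bounded delta_m1_l2rho(1)[OF \<rho>] unfolding bounded_op_l2rho_def y_def by blast
    have "shift_minus A y = delta_m1 x"
      using inv delta_m1_l2rho(1)[OF \<rho>] unfolding is_inverse_l2rho_def y_def by blast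
    moreover have "y k = 0" if "k < 0" for k
      using spt that unfolding spt_def y_def by force
    ultimately have orbit: "y (int n) = (A ^^ n) x" for n
      using causal_solution_delta_m1_eq_funpow[where A = A and y = y and x = x] \<open>A 0 = 0\<close> by blast
    have "(\<Sum>n<N. (norm ((A ^^ n) x) / \<rho> ^ n)\<^sup>2) = (\<Sum>k\<in>int ` {..<N}. (weighted_norm \<rho> y k)\<^sup>2)"
      using \<rho> by (simp add: sum.reindex weighted_norm_def orbit powr_minus powr_realpow divide_inverse)
    also have "\<dots> \<le> (l2rho_norm \<rho> y)\<^sup>2"
      by (rule sum_weighted_norm_le_l2rho_norm[OF \<rho> y]) simp
    also have "\<dots> \<le> (C * (norm x * \<rho>))\<^sup>2"
      using C[OF delta_m1_l2rho(1)[OF \<rho>]] l2rho_norm_nonneg[OF \<rho>]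
      unfolding y_def delta_m1_l2rho(2)[OF \<rho>] by (intro power_mono) auto
    finally show ?thesis by (simp add: power_mult_distrib mult_ac)
  qed
  then show ?thesis by (intro exI[of _ "(C * \<rho>)\<^sup>2"]) auto
qed

locale complex_hilbert_space =
  fixes sc :: "complex \<Rightarrow> 'a::banach \<Rightarrow> 'a"
    and ip :: "'a \<Rightarrow> 'a \<Rightarrow> complex"
  assumes complex_hilbert: "complex_hilbert sc ip"
begin

lemma
  shows sc_add_right: "sc c (x + y) = sc c x + sc c y"
    and sc_add_left: "sc (c + d) x = sc c x + sc d x"
    and sc_sc: "sc c (sc d x) = sc (c * d) x"
    and sc_one [simp]: "sc 1 x = x"
    and sc_of_real: "sc (complex_of_real r) x = r *\<^sub>R x"
    and ip_cnj: "ip x y = cnj (ip y x)"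
    and ip_add_right: "ip x (y + z) = ip x y + ip x z"
    and ip_sc_right: "ip x (sc c y) = c * ip x y"
    and ip_self_nonneg: "0 \<le> Re (ip x x)"
    and norm_eq_sqrt_ip: "norm x = sqrt (Re (ip x x))"
  using complex_hilbert unfolding complex_hilbert_def by (elim conjE; metis)+

lemma sc_zero_left [simp]: "sc 0 x = 0"
  using sc_of_real[of 0 x] by simp

lemma sc_diff_right: "sc c (x - y) = sc c x - sc c y"
  by (metis add_diff_cancel_right' diff_add_cancel sc_add_right)

lemma sc_scaleR: "sc c (r *\<^sub>R x) = r *\<^sub>R sc c x"
  by (metis sc_of_real sc_sc mult.commute)

lemma sc_commute: "sc c (sc d x) = sc d (sc c x)"
  by (simp add: sc_sc mult.commute)

lemma ip_zero_right [simp]: "ip x 0 = 0"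
  using ip_add_right[of x 0 0] by simp

lemma ip_diff_right: "ip x (y - z) = ip x y - ip x z"
  by (metis add_diff_cancel_right' diff_add_cancel ip_add_right)

lemma ip_sc_left: "ip (sc c x) z = cnj c * ip x z"
  by (metis ip_cnj ip_sc_right complex_cnj_mult)

lemma ip_diff_left: "ip (x - y) z = ip x z - ip y z"
  by (metis ip_cnj ip_diff_right complex_cnj_diff)

lemma ip_self: "ip x x = complex_of_real ((norm x)\<^sup>2)"
proof -
  have "Im (ip x x) = 0"
    using ip_cnj[of x x] by (metis cnj.sel(2) complex_eq_iff neg_equal_zero)
  moreover have "Re (ip x x) = (norm x)\<^sup>2"
    using norm_eq_sqrt_ip[of x] ip_self_nonneg[of x] by simp
  ultimately show ?thesis by (simp add: complex_eq_iff)
qed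

lemma norm_sc: "norm (sc c x) = cmod c * norm x"
proof -
  have "ip (sc c x) (sc c x) = cnj c * c * ip x x"
    by (simp add: ip_sc_right ip_sc_left)
  then have "complex_of_real ((norm (sc c x))\<^sup>2) = complex_of_real ((cmod c)\<^sup>2 * (norm x)\<^sup>2)"
    by (simp add: ip_self cnj_mult_self)
  then have "(norm (sc c x))\<^sup>2 = (cmod c * norm x)\<^sup>2"
    unfolding of_real_eq_iff by (simp add: power_mult_distrib)
  then show ?thesis by (simp add: power2_eq_iff_nonneg)
qed

lemma bounded_linear_sc: "bounded_linear (sc c)"
  by (rule bounded_linear_intro[where K = "cmod c"]) (auto simp: sc_add_right sc_scaleR norm_sc)

lemma ip_Cauchy_Schwarz: "cmod (ip x y) \<le> norm x * norm y"
proof (cases "x = 0")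
  case True
  then show ?thesis by (metis ip_cnj ip_zero_right complex_cnj_zero norm_zero order_refl mult_zero_left)
next
  case False
  then have nx: "norm x > 0" by simp
  define c where "c = ip x y / complex_of_real ((norm x)\<^sup>2)"
  have "0 \<le> Re (ip (y - sc c x) (y - sc c x))" by (rule ip_self_nonneg)
  also have "ip (y - sc c x) (y - sc c x) = ip y y - c * ip y x - cnj c * ip x y + cnj c * c * ip x x"
    by (simp add: ip_diff_right ip_diff_left ip_sc_right ip_sc_left algebra_simps)
  also have "cnj c * ip x y = complex_of_real ((cmod (ip x y))\<^sup>2 / (norm x)\<^sup>2)"
    unfolding c_def by (simp add: cnj_mult_self)
  also have "c * ip y x = complex_of_real ((cmod (ip x y))\<^sup>2 / (norm x)\<^sup>2)"
    unfolding c_def using ip_cnj[of y x] cnj_mult_self[of "ip x y"] by (simp add: mult.commute)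
  also have "cnj c * c * ip x x = complex_of_real ((cmod (ip x y))\<^sup>2 / (norm x)\<^sup>2)"
  proof -
    have "cmod c = cmod (ip x y) / (norm x)\<^sup>2"
      unfolding c_def by (simp add: norm_divide norm_power del: of_real_power)
    then show ?thesis using nx by (simp add: cnj_mult_self ip_self power2_eq_square)
  qed
  finally have "0 \<le> (norm y)\<^sup>2 - (cmod (ip x y))\<^sup>2 / (norm x)\<^sup>2"
    by (simp add: ip_self)
  then have "(cmod (ip x y))\<^sup>2 \<le> (norm x * norm y)\<^sup>2"
    using nx by (simp add: field_simps power_mult_distrib)
  then show ?thesis by (simp add: abs_le_square_iff)
qed

lemma bounded_linear_ip: "bounded_linear (ip v)"
proof (rule bounded_linear_intro[where K = "norm v"])
  show "ip v (r *\<^sub>R x) = r *\<^sub>R ip v x" for r x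
    by (metis sc_of_real ip_sc_right scaleR_conv_of_real)
  show "norm (ip v x) \<le> norm x * norm v" for x
    using ip_Cauchy_Schwarz[of v x] by (simp add: mult.commute)
qed (rule ip_add_right)

lemma bounded_clinear_opI:
  assumes "\<And>x y. T (x + y) = T x + T y" "\<And>c x. T (sc c x) = sc c (T x)"
    and "\<And>x. norm (T x) \<le> norm x * K"
  shows "bounded_clinear_op sc T"
  unfolding bounded_clinear_op_def
proof (intro conjI allI)
  show "bounded_linear T"
  proof (rule bounded_linear_intro[where K = K])
    show "T (r *\<^sub>R x) = r *\<^sub>R T x" for r x
      using assms(2)[of "complex_of_real r" x] by (simp add: sc_of_real)
  qed (use assms in auto)
qed (use assms in auto)

lemma bounded_clinear_op_compose:
  "bounded_clinear_op sc f \<Longrightarrow> bounded_clinear_op sc g \<Longrightarrow> bounded_clinear_op sc (\<lambda>x. f (g x))"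
  unfolding bounded_clinear_op_def using bounded_linear_compose[of f g] by (auto simp: o_def)

lemma bounded_clinear_op_sc: "bounded_clinear_op sc (sc c)"
  unfolding bounded_clinear_op_def using bounded_linear_sc by (simp add: sc_commute)

lemma bounded_clinear_op_ident: "bounded_clinear_op sc (\<lambda>x. x)"
  unfolding bounded_clinear_op_def by (simp add: bounded_linear_ident)

end

locale hilbert_operator = complex_hilbert_space +
  fixes A :: "'a::banach \<Rightarrow> 'a"
  assumes bounded_clinear_A: "bounded_clinear_op sc A"
begin

lemma bounded_linear_A: "bounded_linear A"
  using bounded_clinear_A unfolding bounded_clinear_op_def by blast

lemma A_sc: "A (sc c x) = sc c (A x)"
  using bounded_clinear_A unfolding bounded_clinear_op_def by blast

lemma A_zero [simp]: "A 0 = 0"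
  using bounded_linear_A by (simp add: linear_simps)

lemma norm_A_le: "norm (A x) \<le> onorm A * norm x"
  by (rule onorm[OF bounded_linear_A])

lemma bounded_linear_A_pow: "bounded_linear (A ^^ n)"
  by (induction n) (auto intro: bounded_linear_ident bounded_linear_compose[OF bounded_linear_A])

lemma A_pow_sc: "(A ^^ n) (sc c x) = sc c ((A ^^ n) x)"
  by (induction n) (auto simp: A_sc)

lemma A_pow_zero [simp]: "(A ^^ n) 0 = 0"
  using bounded_linear_A_pow[of n] by (simp add: linear_simps)

lemma A_pow_add: "(A ^^ n) (x + y) = (A ^^ n) x + (A ^^ n) y"
  using bounded_linear_A_pow[of n] by (simp add: linear_simps)

lemma A_pow_diff: "(A ^^ n) (x - y) = (A ^^ n) x - (A ^^ n) y"
  using bounded_linear_A_pow[of n] by (simp add: linear_simps)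

lemma norm_A_pow_le: "norm ((A ^^ n) x) \<le> onorm A ^ n * norm x"
proof (induction n)
  case (Suc n)
  have "norm ((A ^^ Suc n) x) \<le> onorm A * norm ((A ^^ n) x)" using norm_A_le by simp
  also have "\<dots> \<le> onorm A * (onorm A ^ n * norm x)"
    using Suc onorm_pos_le[OF bounded_linear_A] by (rule mult_left_mono)
  finally show ?case by (simp add: mult.assoc)
qed simp

definition is_inverse_id_minus :: "complex \<Rightarrow> ('a \<Rightarrow> 'a) \<Rightarrow> bool" where
  "is_inverse_id_minus w S \<longleftrightarrow> bounded_clinear_op sc S \<and>
     (\<forall>x. S (x - sc w (A x)) = x) \<and> (\<forall>x. S x - sc w (A (S x)) = x)"

lemma norm_neumann_term_le:
  assumes M: "\<And>k x. norm ((A ^^ k) x) \<le> M * s ^ k * norm x" and "0 \<le> s"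
  shows "norm (sc (w ^ k) ((A ^^ k) x)) \<le> (\<bar>M\<bar> * norm x) * (cmod w * s) ^ k"
proof -
  have "norm (sc (w ^ k) ((A ^^ k) x)) = cmod w ^ k * norm ((A ^^ k) x)"
    by (simp add: norm_sc norm_power)
  also have "\<dots> \<le> cmod w ^ k * (\<bar>M\<bar> * s ^ k * norm x)"
  proof (rule mult_left_mono)
    have "M * s ^ k * norm x \<le> \<bar>M\<bar> * s ^ k * norm x"
      using \<open>0 \<le> s\<close> by (intro mult_right_mono) auto
    then show "norm ((A ^^ k) x) \<le> \<bar>M\<bar> * s ^ k * norm x" using M[of k x] by linarith
  qed simp
  finally show ?thesis by (simp add: power_mult_distrib mult_ac)
qed

lemma neumann_series_summable:
  assumes M: "\<And>k x. norm ((A ^^ k) x) \<le> M * s ^ k * norm x" and s: "0 \<le> s" and w: "cmod w * s < 1"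
  shows "summable (\<lambda>k. sc (w ^ k) ((A ^^ k) x))"
  by (rule summable_geometric_majorant(1)[OF norm_neumann_term_le[OF M s] _ w]) (use s in simp)

lemma bounded_clinear_op_neumann_series:
  assumes M: "\<And>k x. norm ((A ^^ k) x) \<le> M * s ^ k * norm x" and s: "0 \<le> s" and w: "cmod w * s < 1"
  shows "bounded_clinear_op sc (\<lambda>x. \<Sum>k. sc (w ^ k) ((A ^^ k) x))"
proof (rule bounded_clinear_opI)
  note summable = neumann_series_summable[OF M s w]
  show "(\<Sum>k. sc (w ^ k) ((A ^^ k) (x + y))) = (\<Sum>k. sc (w ^ k) ((A ^^ k) x)) + (\<Sum>k. sc (w ^ k) ((A ^^ k) y))"
    for x y by (simp add: A_pow_add sc_add_right suminf_add[OF summable summable])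
  show "(\<Sum>k. sc (w ^ k) ((A ^^ k) (sc c x))) = sc c (\<Sum>k. sc (w ^ k) ((A ^^ k) x))" for c x
    by (simp add: A_pow_sc sc_commute bounded_linear.suminf[OF bounded_linear_sc summable])
  show "norm (\<Sum>k. sc (w ^ k) ((A ^^ k) x)) \<le> norm x * (\<bar>M\<bar> / (1 - cmod w * s))" for x
    using summable_geometric_majorant(2)[OF norm_neumann_term_le[OF M s] _ w, of x] s
    by (simp add: mult.commute)
qed

lemma neumann_series_inverse:
  assumes M: "\<And>k x. norm ((A ^^ k) x) \<le> M * s ^ k * norm x" and s: "0 \<le> s" and w: "cmod w * s < 1"
  shows "is_inverse_id_minus w (\<lambda>x. \<Sum>k. sc (w ^ k) ((A ^^ k) x))"
proof -
  define T where "T x = (\<Sum>k. sc (w ^ k) ((A ^^ k) x))" for x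
  note term_le = norm_neumann_term_le[OF M s, of w]
  note summable = neumann_series_summable[OF M s w]
  have q: "0 \<le> cmod w * s" using s by simp
  have "T x - sc w (A (T x)) = x" for x
  proof -
    define a where "a k = sc (w ^ k) ((A ^^ k) x)" for k
    have sa: "summable a" using summable unfolding a_def .
    have "sc w (A (T x)) = (\<Sum>k. sc w (A (a k)))"
      unfolding T_def a_def[symmetric] using sa
      by (simp add: bounded_linear.suminf[OF bounded_linear_A] bounded_linear.suminf[OF bounded_linear_sc]
          bounded_linear.summable[OF bounded_linear_A])
    also have "(\<lambda>k. sc w (A (a k))) = (\<lambda>k. a (Suc k))"
      unfolding a_def by (simp add: A_sc A_pow_sc sc_sc)
    also have "(\<Sum>k. a (Suc k)) = T x - a 0"
      using suminf_split_head[OF sa] unfolding T_def a_def by simp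
    finally show ?thesis unfolding a_def by simp
  qed
  moreover have "T (x - sc w (A x)) = x" for x
  proof -
    define a where "a k = sc (w ^ k) ((A ^^ k) x)" for k
    have "(\<lambda>k. (\<bar>M\<bar> * norm x) * (cmod w * s) ^ k) \<longlonglongrightarrow> 0"
      using q w by (intro tendsto_mult_right_zero LIMSEQ_power_zero) auto
    then have "a \<longlonglongrightarrow> 0"
      unfolding a_def by (rule Lim_null_comparison[rotated]) (use term_le in auto)
    then have "(\<lambda>k. a k - a (Suc k)) sums (a 0 - 0)" by (rule telescope_sums')
    then have "(\<lambda>k. a k - a (Suc k)) sums x" by (simp add: a_def)
    moreover have "sc (w ^ k) ((A ^^ k) (x - sc w (A x))) = a k - a (Suc k)" for k
      unfolding a_def by (simp add: A_pow_diff A_pow_sc sc_diff_right sc_sc funpow_swap1 mult.commute)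
    ultimately show ?thesis unfolding T_def by (simp add: sums_iff)
  qed
  ultimately show ?thesis
    using bounded_clinear_op_neumann_series[OF M s w] unfolding is_inverse_id_minus_def T_def by blast
qed

lemma not_in_spectrum_iff:
  "z \<notin> op_spectrum sc A \<longleftrightarrow> (\<exists>B. bounded_clinear_op sc B \<and>
      (\<forall>x. B (sc z x - A x) = x) \<and> (\<forall>x. sc z (B x) - A (B x) = x))"
  unfolding op_spectrum_def by blast

lemma not_in_spectrum_iff_inverse_id_minus:
  assumes "z \<noteq> 0"
  shows "z \<notin> op_spectrum sc A \<longleftrightarrow> (\<exists>S. is_inverse_id_minus (1 / z) S)"
proof -
  have factor: "sc z x - A x = sc z (x - sc (1 / z) (A x))" for x
    using assms by (simp add: sc_diff_right sc_sc)
  show ?thesis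
  proof
    assume "z \<notin> op_spectrum sc A"
    then obtain B where B: "bounded_clinear_op sc B" "\<And>x. B (sc z x - A x) = x"
      "\<And>x. sc z (B x) - A (B x) = x"
      unfolding not_in_spectrum_iff by blast
    have Bsc: "B (sc c x) = sc c (B x)" for c x
      using B(1) unfolding bounded_clinear_op_def by blast
    have "is_inverse_id_minus (1 / z) (\<lambda>x. sc z (B x))"
      unfolding is_inverse_id_minus_def
    proof (intro conjI allI)
      show "bounded_clinear_op sc (\<lambda>x. sc z (B x))"
        by (rule bounded_clinear_op_compose[OF bounded_clinear_op_sc B(1)])
      show "sc z (B (x - sc (1 / z) (A x))) = x" for x
        by (metis B(2) Bsc factor)
      show "sc z (B x) - sc (1 / z) (A (sc z (B x))) = x" for x
        using B(3)[of x] assms by (simp add: A_sc sc_sc)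
    qed
    then show "\<exists>S. is_inverse_id_minus (1 / z) S" by blast
  next
    assume "\<exists>S. is_inverse_id_minus (1 / z) S"
    then obtain S where S: "bounded_clinear_op sc S" "\<And>x. S (x - sc (1 / z) (A x)) = x"
      "\<And>x. S x - sc (1 / z) (A (S x)) = x"
      unfolding is_inverse_id_minus_def by blast
    show "z \<notin> op_spectrum sc A"
      unfolding not_in_spectrum_iff
    proof (intro exI conjI allI)
      show "bounded_clinear_op sc (\<lambda>x. sc (1 / z) (S x))"
        by (rule bounded_clinear_op_compose[OF bounded_clinear_op_sc S(1)])
      show "sc (1 / z) (S (sc z x - A x)) = x" for x
        using S(1,2) assms unfolding factor bounded_clinear_op_def by (simp add: sc_sc)
      show "sc z (sc (1 / z) (S x)) - A (sc (1 / z) (S x)) = x" for x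
        using S(3)[of x] assms by (simp add: A_sc sc_sc)
    qed
  qed
qed

lemma spectral_radius_le_of_power_bound:
  assumes M: "\<And>k x. norm ((A ^^ k) x) \<le> M * s ^ k * norm x" and s: "0 \<le> s"
  shows "spectral_radius sc A \<le> ereal s"
  unfolding spectral_radius_def
proof (rule Sup_least, clarify)
  fix z assume z: "z \<in> op_spectrum sc A"
  show "ereal (cmod z) \<le> ereal s"
  proof (rule ccontr)
    assume "\<not> ereal (cmod z) \<le> ereal s"
    then have "s < cmod z" by simp
    then have "z \<noteq> 0" "cmod (1 / z) * s < 1"
      using s by (auto simp: norm_divide divide_simps)
    then show False
      using z neumann_series_inverse[OF M s] not_in_spectrum_iff_inverse_id_minus by blast
  qed
qed

lemma is_inverse_id_minus_bounded_linear: "is_inverse_id_minus w S \<Longrightarrow> bounded_linear S"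
  unfolding is_inverse_id_minus_def bounded_clinear_op_def by blast

lemma resolvent_identity:
  assumes S: "is_inverse_id_minus w S" and S0: "is_inverse_id_minus w0 S0"
  shows "S x - S0 x = sc (w - w0) (S0 (A (S x)))"
proof -
  have S0_left: "S0 (u - sc w0 (A u)) = u" for u
    using S0 unfolding is_inverse_id_minus_def by blast
  have S0_sc: "S0 (sc c u) = sc c (S0 u)" for c u
    using S0 unfolding is_inverse_id_minus_def bounded_clinear_op_def by blast
  have S0_add: "S0 (u + v) = S0 u + S0 v" for u v
    using is_inverse_id_minus_bounded_linear[OF S0] by (simp add: linear_simps)
  have "S x - sc w0 (A (S x)) = x + sc (w - w0) (A (S x))"
  proof -
    have "S x - sc w (A (S x)) = x" using S unfolding is_inverse_id_minus_def by blast
    then show ?thesis by (simp add: algebra_simps flip: sc_add_left)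
  qed
  then have "S x = S0 x + S0 (sc (w - w0) (A (S x)))"
    using S0_left[of "S x"] S0_add by metis
  then show ?thesis by (simp add: S0_sc algebra_simps)
qed

lemma norm_resolvent_diff_le:
  assumes S: "is_inverse_id_minus w S" and S0: "is_inverse_id_minus w0 S0"
  shows "norm (S x - S0 x) \<le> cmod (w - w0) * onorm S0 * onorm A * norm (S x)"
proof -
  have "norm (S0 (A (S x))) \<le> onorm S0 * (onorm A * norm (S x))"
    using onorm[OF is_inverse_id_minus_bounded_linear[OF S0], of "A (S x)"]
      mult_left_mono[OF norm_A_le onorm_pos_le[OF is_inverse_id_minus_bounded_linear[OF S0]]]
    by (meson order_trans)
  then show ?thesis
    by (simp add: resolvent_identity[OF S S0] norm_sc mult_left_mono mult.assoc)
qed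

lemma resolvent_bounds_nearby:
  assumes S: "is_inverse_id_minus w S" and S0: "is_inverse_id_minus w0 S0"
    and close: "cmod (w - w0) * onorm S0 * onorm A \<le> 1/2"
  shows "onorm S \<le> 2 * onorm S0"
    and "norm (S x - S0 x) \<le> cmod (w - w0) * (2 * onorm A * (onorm S0)\<^sup>2) * norm x"
proof -
  note bl = is_inverse_id_minus_bounded_linear
  have "norm (S y) \<le> 2 * onorm S0 * norm y" for y
  proof -
    have "norm (S y) \<le> norm (S0 y) + norm (S y - S0 y)"
      by (metis add_diff_cancel_left' diff_add_cancel norm_triangle_ineq)
    also have "\<dots> \<le> onorm S0 * norm y + 1/2 * norm (S y)"
      using onorm[OF bl[OF S0], of y] norm_resolvent_diff_le[OF S S0, of y]
        mult_right_mono[OF close norm_ge_zero[of "S y"]]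
      by linarith
    finally show ?thesis by simp
  qed
  then show onorm_le: "onorm S \<le> 2 * onorm S0"
    using onorm_pos_le[OF bl[OF S0]] by (intro onorm_bound) auto
  have "norm (S x - S0 x) \<le> cmod (w - w0) * onorm S0 * onorm A * (onorm S * norm x)"
    using norm_resolvent_diff_le[OF S S0, of x] onorm[OF bl[OF S], of x]
      onorm_pos_le[OF bl[OF S0]] onorm_pos_le[OF bounded_linear_A]
    by (meson mult_left_mono mult_nonneg_nonneg norm_ge_zero order_trans)
  also have "\<dots> \<le> cmod (w - w0) * onorm S0 * onorm A * (2 * onorm S0 * norm x)"
    using onorm_le onorm_pos_le[OF bl[OF S0]] onorm_pos_le[OF bounded_linear_A]
    by (intro mult_left_mono mult_right_mono) auto
  finally show "norm (S x - S0 x) \<le> cmod (w - w0) * (2 * onorm A * (onorm S0)\<^sup>2) * norm x"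
    by (simp add: power2_eq_square mult_ac)
qed

end

locale spectrum_within_radius = hilbert_operator +
  fixes r :: real
  assumes radius_pos: "0 < r"
    and not_in_spectrum: "\<And>z. r < cmod z \<Longrightarrow> z \<notin> op_spectrum sc A"
begin

text \<open>\<open>res w\<close> is \<open>(1 - w A)\<^sup>-\<^sup>1 = z (z - A)\<^sup>-\<^sup>1\<close> for \<open>z = 1 / w\<close>; outside \<open>disc\<close> it is an unspecified junk value.\<close>

definition res :: "complex \<Rightarrow> 'a \<Rightarrow> 'a" where
  "res w = (SOME S. is_inverse_id_minus w S)"

abbreviation disc :: "complex set" where
  "disc \<equiv> ball 0 (1 / r)"

lemma is_inverse_id_minus_res:
  assumes "w \<in> disc"
  shows "is_inverse_id_minus w (res w)"
proof -
  have "\<exists>S. is_inverse_id_minus w S"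
  proof (cases "w = 0")
    case True
    then show ?thesis
      unfolding is_inverse_id_minus_def using bounded_clinear_op_ident by auto
  next
    case False
    have "r < cmod (1 / w)"
      using assms False radius_pos by (simp add: norm_divide field_simps)
    then show ?thesis
      using not_in_spectrum not_in_spectrum_iff_inverse_id_minus[of "1 / w"] False by simp
  qed
  then show ?thesis unfolding res_def by (rule someI_ex)
qed

lemma bounded_linear_res: "w \<in> disc \<Longrightarrow> bounded_linear (res w)"
  by (rule is_inverse_id_minus_bounded_linear[OF is_inverse_id_minus_res])

lemma eventually_res_close:
  assumes w0: "w0 \<in> disc"
  shows "\<forall>\<^sub>F w in at w0. w \<in> disc \<and>
    (\<forall>x. norm (res w x - res w0 x) \<le> cmod (w - w0) * (2 * onorm A * (onorm (res w0))\<^sup>2) * norm x)"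
proof -
  have "\<forall>\<^sub>F w in at w0. w \<in> disc"
    using topological_tendstoD[OF tendsto_ident_at open_ball w0] .
  moreover have "((\<lambda>w. cmod (w - w0) * onorm (res w0) * onorm A) \<longlongrightarrow> 0) (at w0)"
    by (auto intro!: tendsto_eq_intros tendsto_norm_zero LIM_zero)
  then have "\<forall>\<^sub>F w in at w0. cmod (w - w0) * onorm (res w0) * onorm A < 1/2"
    by (rule order_tendstoD(2)) simp
  ultimately show ?thesis
    by eventually_elim
      (use resolvent_bounds_nearby(2)[OF is_inverse_id_minus_res is_inverse_id_minus_res[OF w0]] in auto)
qed

lemma res_tendsto:
  assumes w0: "w0 \<in> disc"
  shows "((\<lambda>w. res w x) \<longlongrightarrow> res w0 x) (at w0)"
proof (rule LIM_zero_cancel, rule Lim_null_comparison)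
  show "\<forall>\<^sub>F w in at w0. norm (res w x - res w0 x) \<le> cmod (w - w0) * (2 * onorm A * (onorm (res w0))\<^sup>2) * norm x"
    using eventually_res_close[OF w0] by eventually_elim blast
  show "((\<lambda>w. cmod (w - w0) * (2 * onorm A * (onorm (res w0))\<^sup>2) * norm x) \<longlongrightarrow> 0) (at w0)"
    by (auto intro!: tendsto_eq_intros tendsto_norm_zero LIM_zero)
qed

lemma isCont_onorm_res:
  assumes w0: "w0 \<in> disc"
  shows "isCont (\<lambda>w. onorm (res w)) w0"
  unfolding isCont_def
proof (rule LIM_zero_cancel, rule Lim_null_comparison)
  show "\<forall>\<^sub>F w in at w0. norm (onorm (res w) - onorm (res w0)) \<le> cmod (w - w0) * (2 * onorm A * (onorm (res w0))\<^sup>2)"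
    using eventually_res_close[OF w0]
  proof eventually_elim
    case (elim w)
    have "\<bar>onorm (res w) - onorm (res w0)\<bar> \<le> onorm (\<lambda>x. res w x - res w0 x)"
      using elim bounded_linear_res w0 by (intro abs_onorm_diff_le) auto
    also have "\<dots> \<le> cmod (w - w0) * (2 * onorm A * (onorm (res w0))\<^sup>2)"
      using elim onorm_pos_le[OF bounded_linear_A] by (intro onorm_bound) auto
    finally show ?case by simp
  qed
  show "((\<lambda>w. cmod (w - w0) * (2 * onorm A * (onorm (res w0))\<^sup>2)) \<longlongrightarrow> 0) (at w0)"
    by (auto intro!: tendsto_eq_intros tendsto_norm_zero LIM_zero)
qed

lemma ip_res_has_field_derivative:
  assumes w0: "w0 \<in> disc"
  shows "((\<lambda>w. ip v (res w x)) has_field_derivative ip v (res w0 (A (res w0 x)))) (at w0)"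
  unfolding has_field_derivative_iff
proof (rule Lim_transform_eventually)
  have "bounded_linear (\<lambda>u. ip v (res w0 (A u)))"
    using bounded_linear_compose[OF bounded_linear_ip bounded_linear_compose[OF bounded_linear_res[OF w0] bounded_linear_A]]
    by (simp add: o_def)
  from bounded_linear.tendsto[OF this res_tendsto[OF w0]]
  show "((\<lambda>w. ip v (res w0 (A (res w x)))) \<longlongrightarrow> ip v (res w0 (A (res w0 x)))) (at w0)" .
  have "\<forall>\<^sub>F w in at w0. w \<in> disc \<and> w \<noteq> w0"
    using eventually_res_close[OF w0] eventually_at_filter[of "\<lambda>w. w \<noteq> w0"]
    by (auto elim: eventually_mono simp: eventually_conj_iff eventually_at_filter)
  then show "\<forall>\<^sub>F w in at w0. ip v (res w0 (A (res w x))) = (ip v (res w x) - ip v (res w0 x)) / (w - w0)"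
  proof eventually_elim
    case (elim w)
    have "ip v (res w x) - ip v (res w0 x) = (w - w0) * ip v (res w0 (A (res w x)))"
      using resolvent_identity[OF is_inverse_id_minus_res is_inverse_id_minus_res[OF w0]] elim
      by (simp add: ip_sc_right flip: ip_diff_right)
    then show ?case using elim by simp
  qed
qed

lemma ip_res_holomorphic: "(\<lambda>w. ip v (res w x)) holomorphic_on disc"
  using ip_res_has_field_derivative by (subst holomorphic_on_open[OF open_ball]) blast

lemma res_eq_neumann_series:
  assumes "w \<in> disc" "cmod w * onorm A < 1"
  shows "res w x = (\<Sum>k. sc (w ^ k) ((A ^^ k) x))"
proof -
  define T where "T y = (\<Sum>k. sc (w ^ k) ((A ^^ k) y))" for y
  have "is_inverse_id_minus w T"
    unfolding T_def using norm_A_pow_le onorm_pos_le[OF bounded_linear_A] assms(2)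
    by (intro neumann_series_inverse[where M = 1]) auto
  then have "res w x = res w (T x - sc w (A (T x)))"
    unfolding is_inverse_id_minus_def by simp
  also have "\<dots> = T x"
    using is_inverse_id_minus_res[OF assms(1)] unfolding is_inverse_id_minus_def by blast
  finally show ?thesis unfolding T_def .
qed

lemma ip_res_has_fps_expansion:
  "(\<lambda>w. ip v (res w x)) has_fps_expansion Abs_fps (\<lambda>k. ip v ((A ^^ k) x))"
proof -
  have nA: "0 \<le> onorm A" by (rule onorm_pos_le[OF bounded_linear_A])
  have neumann: "summable (\<lambda>k. ip v ((A ^^ k) x) * w ^ k)"
    and ip_neumann: "ip v (\<Sum>k. sc (w ^ k) ((A ^^ k) x)) = (\<Sum>k. ip v ((A ^^ k) x) * w ^ k)"
    if "cmod w * onorm A < 1" for w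
  proof -
    have summable: "summable (\<lambda>k. sc (w ^ k) ((A ^^ k) x))"
      using norm_A_pow_le nA that by (intro neumann_series_summable[where M = 1]) auto
    have coeffs: "(\<lambda>k. ip v (sc (w ^ k) ((A ^^ k) x))) = (\<lambda>k. ip v ((A ^^ k) x) * w ^ k)"
      by (simp add: ip_sc_right mult.commute)
    show "summable (\<lambda>k. ip v ((A ^^ k) x) * w ^ k)"
      using bounded_linear.summable[OF bounded_linear_ip summable, of v] unfolding coeffs .
    show "ip v (\<Sum>k. sc (w ^ k) ((A ^^ k) x)) = (\<Sum>k. ip v ((A ^^ k) x) * w ^ k)"
      using bounded_linear.suminf[OF bounded_linear_ip summable, of v] unfolding coeffs .
  qed
  define \<delta> where "\<delta> = min (1 / (onorm A + 1)) (1 / r)"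
  have \<delta>: "0 < \<delta>" using nA radius_pos by (simp add: \<delta>_def)
  have small: "cmod w * onorm A < 1" if "cmod w \<le> \<delta>" for w
  proof -
    have "cmod w \<le> 1 / (onorm A + 1)" using that by (simp add: \<delta>_def)
    then have "cmod w * onorm A \<le> 1 / (onorm A + 1) * onorm A" using nA by (rule mult_right_mono)
    also have "\<dots> < 1" using nA by (simp add: field_simps)
    finally show ?thesis .
  qed
  have "ereal 0 < ereal \<delta>" using \<delta> by simp
  also have "ereal \<delta> \<le> conv_radius (\<lambda>k. ip v ((A ^^ k) x))"
    using conv_radius_geI[OF neumann[OF small, of "complex_of_real \<delta>"]] \<delta> by simp
  finally have "0 < fps_conv_radius (Abs_fps (\<lambda>k. ip v ((A ^^ k) x)))"
    by (simp add: fps_conv_radius_def zero_ereal_def)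
  moreover have "\<forall>\<^sub>F w in nhds 0. eval_fps (Abs_fps (\<lambda>k. ip v ((A ^^ k) x))) w = ip v (res w x)"
    unfolding eventually_nhds
  proof (intro exI conjI ballI)
    show "open (ball 0 \<delta>)" "(0::complex) \<in> ball 0 \<delta>" using \<delta> by auto
    fix w :: complex assume "w \<in> ball 0 \<delta>"
    then have "cmod w \<le> \<delta>" "w \<in> disc" by (auto simp: \<delta>_def)
    then show "eval_fps (Abs_fps (\<lambda>k. ip v ((A ^^ k) x))) w = ip v (res w x)"
      using res_eq_neumann_series ip_neumann[OF small] small by (simp add: eval_fps_def)
  qed
  ultimately show ?thesis unfolding has_fps_expansion_def ..
qed

lemma cball_subset_disc:
  assumes "r < s"
  shows "cball 0 (1 / s) \<subseteq> disc"
proof -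
  have "1 / s < 1 / r" using assms radius_pos by (simp add: frac_less2)
  then show ?thesis by auto
qed

lemma onorm_res_bounded_on_circle:
  assumes "r < s"
  obtains M where "0 \<le> M" "\<And>w. w \<in> sphere 0 (1 / s) \<Longrightarrow> onorm (res w) \<le> M"
proof -
  have s: "0 < s" using radius_pos assms by simp
  have sphere_sub: "sphere 0 (1 / s) \<subseteq> disc"
    using cball_subset_disc[OF assms] sphere_cball by blast
  have "compact (sphere (0::complex) (1 / s))" "sphere (0::complex) (1 / s) \<noteq> {}"
    using s by auto
  moreover have "continuous_on (sphere 0 (1 / s)) (\<lambda>w. onorm (res w))"
    using isCont_onorm_res sphere_sub by (blast intro: continuous_at_imp_continuous_on)
  ultimately obtain w1 where "w1 \<in> sphere 0 (1 / s)"
    and "\<And>w. w \<in> sphere 0 (1 / s) \<Longrightarrow> onorm (res w) \<le> onorm (res w1)"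
    using continuous_attains_sup[of "sphere 0 (1 / s)" "\<lambda>w. onorm (res w)"] by blast
  moreover have "0 \<le> onorm (res w1)"
    using \<open>w1 \<in> sphere 0 (1 / s)\<close> sphere_sub by (blast intro: onorm_pos_le[OF bounded_linear_res])
  ultimately show ?thesis using that by blast
qed

lemma power_bound:
  assumes "r < s"
  shows "\<exists>M. \<forall>n x. norm ((A ^^ n) x) \<le> M * s ^ n * norm x"
proof -
  have s: "0 < s" using radius_pos assms by simp
  note cball_sub = cball_subset_disc[OF assms]
  obtain M where M: "0 \<le> M" and M_bound: "\<And>w. w \<in> sphere 0 (1 / s) \<Longrightarrow> onorm (res w) \<le> M"
    using onorm_res_bounded_on_circle[OF assms] by blast
  have "norm ((A ^^ n) x) \<le> M * s ^ n * norm x" for n x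
  proof -
    define v where "v = (A ^^ n) x"
    define \<psi> where "\<psi> w = ip v (res w x)" for w
    \<comment> \<open>the \<open>n\<close>-th Taylor coefficient of \<open>\<psi>\<close> at 0 is \<open>ip v v = (norm v)\<^sup>2\<close>\<close>
    have "norm ((deriv ^^ n) \<psi> 0) \<le> fact n * (norm v * M * norm x) / (1 / s) ^ n"
    proof (rule Cauchy_inequality)
      show "\<psi> holomorphic_on ball 0 (1 / s)"
        unfolding \<psi>_def by (rule holomorphic_on_subset[OF ip_res_holomorphic]) (use cball_sub in auto)
      show "continuous_on (cball 0 (1 / s)) \<psi>"
        unfolding \<psi>_def by (rule continuous_on_subset[OF holomorphic_on_imp_continuous_on[OF ip_res_holomorphic] cball_sub])
      show "0 < 1 / s" using s by simp
      fix w :: complex assume "norm (0 - w) = 1 / s"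
      then have w: "w \<in> sphere 0 (1 / s)" by simp
      have w_disc: "w \<in> disc" using w cball_sub sphere_cball by blast
      have "norm (res w x) \<le> M * norm x"
        using onorm[OF bounded_linear_res[OF w_disc], of x] mult_right_mono[OF M_bound[OF w] norm_ge_zero[of x]]
        by linarith
      then show "norm (\<psi> w) \<le> norm v * M * norm x"
        using ip_Cauchy_Schwarz[of v "res w x"] unfolding \<psi>_def
        by (metis mult.assoc mult_left_mono norm_ge_zero order_trans)
    qed
    moreover have "(deriv ^^ n) \<psi> 0 = fact n * ip v v"
      using fps_nth_fps_expansion[OF ip_res_has_fps_expansion[of v x], of n]
      unfolding \<psi>_def v_def by (simp add: field_simps)
    ultimately have "fact n * cmod (ip v v) \<le> fact n * (norm v * M * norm x * s ^ n)"
      by (simp add: norm_mult power_one_over)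
    then have "norm v * norm v \<le> norm v * (M * s ^ n * norm x)"
      by (simp add: ip_self power2_eq_square norm_mult mult_ac del: of_real_mult)
    moreover have "0 \<le> M * s ^ n * norm x" using M s by simp
    ultimately show ?thesis
      unfolding v_def[symmetric] by (cases "norm v = 0") (simp_all add: mult_le_cancel_left)
  qed
  then show ?thesis by blast
qed

end

definition causal_inverse :: "('a::real_normed_vector \<Rightarrow> 'a) \<Rightarrow> (int \<Rightarrow> 'a) \<Rightarrow> int \<Rightarrow> 'a" where
  "causal_inverse A f k = (\<Sum>j. (A ^^ j) (f (k - 1 - int j)))"

locale power_bounded = hilbert_operator +
  fixes \<rho> M s :: real
  assumes rho_pos: "0 < \<rho>" and s_nonneg: "0 \<le> s" and s_less: "s < \<rho>" and M_nonneg: "0 \<le> M"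
    and A_pow_bound: "\<And>n x. norm ((A ^^ n) x) \<le> M * s ^ n * norm x"
begin

definition q :: real where "q = s / \<rho>"

lemma q: "0 \<le> q" "q < 1"
  using rho_pos s_nonneg s_less by (auto simp: q_def)

lemma norm_A_pow_l2rho_le:
  assumes f: "f \<in> l2rho \<rho>"
  shows "norm ((A ^^ j) (f (k - int j))) \<le> (M * l2rho_norm \<rho> f * \<rho> powr real_of_int k) * q ^ j"
proof -
  have "norm ((A ^^ j) (f (k - int j))) \<le> M * s ^ j * norm (f (k - int j))"
    by (rule A_pow_bound)
  also have "\<dots> \<le> M * s ^ j * (l2rho_norm \<rho> f * \<rho> powr real_of_int (k - int j))"
    using M_nonneg s_nonneg by (intro mult_left_mono norm_le_l2rho_norm[OF rho_pos f]) auto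
  also have "\<rho> powr real_of_int (k - int j) = \<rho> powr real_of_int k / \<rho> ^ j"
    using rho_pos by (simp add: powr_diff powr_realpow)
  finally show ?thesis by (simp add: q_def power_divide mult_ac)
qed

lemma summable_causal_inverse:
  assumes "f \<in> l2rho \<rho>"
  shows "summable (\<lambda>j. (A ^^ j) (f (k - int j)))"
  by (rule summable_geometric_majorant(1)[OF norm_A_pow_l2rho_le[OF assms] q])

lemma weighted_norm_causal_inverse_le:
  assumes f: "f \<in> l2rho \<rho>"
  shows "weighted_norm \<rho> (causal_inverse A f) k \<le> M / \<rho> * (\<Sum>j. q ^ j * weighted_norm \<rho> f (k - 1 - int j))"
proof -
  define b where "b j = \<rho> powr real_of_int k * (M / \<rho>) * (q ^ j * weighted_norm \<rho> f (k - 1 - int j))" for j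
  have term_le: "norm ((A ^^ j) (f (k - 1 - int j))) \<le> b j" for j
  proof -
    have "norm ((A ^^ j) (f (k - 1 - int j))) \<le> M * s ^ j * norm (f (k - 1 - int j))"
      by (rule A_pow_bound)
    also have "norm (f (k - 1 - int j)) = weighted_norm \<rho> f (k - 1 - int j) * \<rho> powr real_of_int (k - 1 - int j)"
      by (rule norm_eq_weighted_norm[OF rho_pos])
    also have "\<rho> powr real_of_int (k - 1 - int j) = \<rho> powr real_of_int k / \<rho> / \<rho> ^ j"
      using rho_pos by (simp add: powr_diff powr_realpow)
    finally show ?thesis
      using rho_pos by (simp add: b_def q_def power_divide field_simps)
  qed
  have summable_weighted: "summable (\<lambda>j. q ^ j * weighted_norm \<rho> f (k - 1 - int j))"
  proof (rule summable_geometric_majorant(1)[OF _ q])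
    show "norm (q ^ j * weighted_norm \<rho> f (k - 1 - int j)) \<le> l2rho_norm \<rho> f * q ^ j" for j
      using q weighted_norm_le_l2rho_norm[OF rho_pos f, of "k - 1 - int j"]
      by (simp add: weighted_norm_def abs_mult mult.commute[of "q ^ j"] mult_right_mono)
  qed
  then have summable_b: "summable b"
    unfolding b_def by (rule summable_mult)
  have "norm (causal_inverse A f k) \<le> (\<Sum>j. norm ((A ^^ j) (f (k - 1 - int j))))"
    unfolding causal_inverse_def
    by (rule summable_norm, rule summable_comparison_test'[OF summable_b]) (use term_le in auto)
  also have "\<dots> \<le> suminf b"
    by (rule suminf_le[OF term_le _ summable_b], rule summable_comparison_test'[OF summable_b])
      (use term_le in auto)
  also have "\<dots> = \<rho> powr real_of_int k * (M / \<rho> * (\<Sum>j. q ^ j * weighted_norm \<rho> f (k - 1 - int j)))"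
    unfolding b_def suminf_mult[OF summable_weighted] by (simp only: mult.assoc)
  finally show ?thesis
    using rho_pos by (simp add: weighted_norm_def powr_minus field_simps)
qed

lemma causal_inverse_l2rho:
  assumes f: "f \<in> l2rho \<rho>"
  shows "causal_inverse A f \<in> l2rho \<rho>"
    and "l2rho_norm \<rho> (causal_inverse A f) \<le> M / \<rho> / (1 - q) * l2rho_norm \<rho> f"
proof -
  define g where "g m = weighted_norm \<rho> f (m - 1)" for m
  have g_sums: "(\<Sum>m\<in>F. (g m)\<^sup>2) \<le> (l2rho_norm \<rho> f)\<^sup>2" if "finite F" for F
    using sum_weighted_norm_le_l2rho_norm[OF rho_pos f, of "(\<lambda>m. m - 1) ` F"] that
    by (simp add: g_def sum.reindex inj_on_def)
  have "(\<Sum>k\<in>F. (weighted_norm \<rho> (causal_inverse A f) k)\<^sup>2) \<le> (M / \<rho> / (1 - q) * l2rho_norm \<rho> f)\<^sup>2"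
    if F: "finite F" for F
  proof -
    have "(\<Sum>k\<in>F. (weighted_norm \<rho> (causal_inverse A f) k)\<^sup>2) \<le> (\<Sum>k\<in>F. (M / \<rho>)\<^sup>2 * (\<Sum>j. q ^ j * g (k - int j))\<^sup>2)"
    proof (rule sum_mono)
      fix k
      have "(\<lambda>j. q ^ j * g (k - int j)) = (\<lambda>j. q ^ j * weighted_norm \<rho> f (k - 1 - int j))"
        by (simp add: g_def algebra_simps)
      then show "(weighted_norm \<rho> (causal_inverse A f) k)\<^sup>2 \<le> (M / \<rho>)\<^sup>2 * (\<Sum>j. q ^ j * g (k - int j))\<^sup>2"
        using weighted_norm_causal_inverse_le[OF f, of k]
        by (simp add: weighted_norm_def power_mono flip: power_mult_distrib)
    qed
    also have "\<dots> = (M / \<rho>)\<^sup>2 * (\<Sum>k\<in>F. (\<Sum>j. q ^ j * g (k - int j))\<^sup>2)"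
      by (simp add: sum_distrib_left)
    also have "\<dots> \<le> (M / \<rho>)\<^sup>2 * ((l2rho_norm \<rho> f)\<^sup>2 / (1 - q)\<^sup>2)"
      by (intro mult_left_mono geometric_convolution_sum_square_le[OF q _ g_sums F])
        (simp_all add: g_def weighted_norm_def)
    also have "\<dots> = (M / \<rho> / (1 - q) * l2rho_norm \<rho> f)\<^sup>2"
      by (simp add: power_mult_distrib power_divide)
    finally show ?thesis .
  qed
  moreover have "0 \<le> M / \<rho> / (1 - q) * l2rho_norm \<rho> f"
    using M_nonneg rho_pos q l2rho_norm_nonneg[OF rho_pos, of f] by simp
  ultimately show "causal_inverse A f \<in> l2rho \<rho>"
    and "l2rho_norm \<rho> (causal_inverse A f) \<le> M / \<rho> / (1 - q) * l2rho_norm \<rho> f"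
    using l2rho_normI[OF rho_pos] by blast+
qed

lemma causal_inverse_add:
  assumes "x \<in> l2rho \<rho>" "y \<in> l2rho \<rho>"
  shows "causal_inverse A (\<lambda>k. x k + y k) = (\<lambda>k. causal_inverse A x k + causal_inverse A y k)"
  unfolding causal_inverse_def A_pow_add
  using suminf_add[OF summable_causal_inverse[OF assms(1)] summable_causal_inverse[OF assms(2)]] by simp

lemma causal_inverse_sc:
  assumes "x \<in> l2rho \<rho>"
  shows "causal_inverse A (\<lambda>k. sc c (x k)) = (\<lambda>k. sc c (causal_inverse A x k))"
  unfolding causal_inverse_def A_pow_sc
  using bounded_linear.suminf[OF bounded_linear_sc summable_causal_inverse[OF assms]] by simp

lemma causal_inverse_shift_minus:
  assumes x: "x \<in> l2rho \<rho>"
  shows "causal_inverse A (shift_minus A x) = x"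
proof
  fix k
  define a where "a j = (A ^^ j) (x (k - int j))" for j
  have "a \<longlonglongrightarrow> 0"
  proof (rule Lim_null_comparison)
    show "\<forall>\<^sub>F j in sequentially. norm (a j) \<le> (M * l2rho_norm \<rho> x * \<rho> powr real_of_int k) * q ^ j"
      unfolding a_def using norm_A_pow_l2rho_le[OF x] by simp
    show "(\<lambda>j. (M * l2rho_norm \<rho> x * \<rho> powr real_of_int k) * q ^ j) \<longlonglongrightarrow> 0"
      using q by (intro tendsto_mult_right_zero LIMSEQ_power_zero) auto
  qed
  then have "(\<lambda>j. a j - a (Suc j)) sums (a 0 - 0)" by (rule telescope_sums')
  moreover have "(A ^^ j) (shift_minus A x (k - 1 - int j)) = a j - a (Suc j)" for j
    unfolding shift_minus_def a_def A_pow_diff by (simp add: funpow_swap1 algebra_simps)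
  ultimately show "causal_inverse A (shift_minus A x) k = x k"
    unfolding causal_inverse_def by (simp add: sums_iff a_def)
qed

lemma shift_minus_causal_inverse:
  assumes x: "x \<in> l2rho \<rho>"
  shows "shift_minus A (causal_inverse A x) = x"
proof
  fix k
  define a where "a j = (A ^^ j) (x (k - int j))" for j
  have summable_a: "summable a" unfolding a_def by (rule summable_causal_inverse[OF x])
  have "A (causal_inverse A x k) = (\<Sum>j. A ((A ^^ j) (x (k - 1 - int j))))"
    unfolding causal_inverse_def by (rule bounded_linear.suminf[OF bounded_linear_A summable_causal_inverse[OF x]])
  also have "\<dots> = (\<Sum>j. a (Suc j))"
    unfolding a_def by (simp add: algebra_simps)
  finally have "A (causal_inverse A x k) = (\<Sum>j. a (Suc j))" .
  moreover have "causal_inverse A x (k + 1) = suminf a"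
    unfolding causal_inverse_def a_def by simp
  ultimately show "shift_minus A (causal_inverse A x) k = x k"
    unfolding shift_minus_def using suminf_split_head[OF summable_a] by (simp add: a_def)
qed

lemma causal_causal_inverse: "causal_l2rho \<rho> (causal_inverse A)"
  unfolding causal_l2rho_def
proof (intro allI ballI impI subsetI)
  fix a f k assume spt: "spt f \<subseteq> {a..}" and k: "k \<in> spt (causal_inverse A f)"
  show "k \<in> {a..}"
  proof (rule ccontr)
    assume "k \<notin> {a..}"
    then have "f (k - 1 - int j) = 0" for j using spt unfolding spt_def by auto
    then show False using k unfolding spt_def causal_inverse_def by simp
  qed
qed

lemma causal_inverse_is_bounded_causal_inverse:
  "is_inverse_l2rho \<rho> A (causal_inverse A) \<and> bounded_op_l2rho \<rho> sc (causal_inverse A) \<and>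
    causal_l2rho \<rho> (causal_inverse A)"
  unfolding is_inverse_l2rho_def bounded_op_l2rho_def
  using causal_inverse_shift_minus shift_minus_causal_inverse causal_inverse_l2rho
    causal_inverse_add causal_inverse_sc causal_causal_inverse
  by blast

end

context hilbert_operator
begin

lemma spectral_radius_less_iff_power_bound:
  assumes "0 < \<rho>"
  shows "spectral_radius sc A < ereal \<rho> \<longleftrightarrow>
    (\<exists>M s. 0 \<le> s \<and> s < \<rho> \<and> (\<forall>n x. norm ((A ^^ n) x) \<le> M * s ^ n * norm x))"
proof
  assume "spectral_radius sc A < ereal \<rho>"
  then obtain t where t: "spectral_radius sc A < ereal t" "ereal t < ereal \<rho>"
    using ereal_dense2 by blast
  define r where "r = max t (\<rho> / 2)"
  have r: "0 < r" "r < \<rho>" using t assms by (auto simp: r_def)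
  have "z \<notin> op_spectrum sc A" if "r < cmod z" for z
  proof
    assume "z \<in> op_spectrum sc A"
    then have "ereal (cmod z) \<le> spectral_radius sc A"
      unfolding spectral_radius_def by (rule Sup_upper[OF imageI])
    then have "ereal (cmod z) < ereal t" using t(1) by (rule le_less_trans)
    with that show False by (simp add: r_def)
  qed
  then interpret spectrum_within_radius sc ip A r
    using r by unfold_locales auto
  have "r < (r + \<rho>) / 2" "0 \<le> (r + \<rho>) / 2" "(r + \<rho>) / 2 < \<rho>" using r by auto
  with power_bound[OF this(1)] show "\<exists>M s. 0 \<le> s \<and> s < \<rho> \<and> (\<forall>n x. norm ((A ^^ n) x) \<le> M * s ^ n * norm x)"
    by blast
next
  assume "\<exists>M s. 0 \<le> s \<and> s < \<rho> \<and> (\<forall>n x. norm ((A ^^ n) x) \<le> M * s ^ n * norm x)"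
  then obtain M s where "0 \<le> s" "s < \<rho>" "\<And>n x. norm ((A ^^ n) x) \<le> M * s ^ n * norm x" by blast
  then have "spectral_radius sc A \<le> ereal s" by (intro spectral_radius_le_of_power_bound)
  also have "\<dots> < ereal \<rho>" using \<open>s < \<rho>\<close> by simp
  finally show "spectral_radius sc A < ereal \<rho>" .
qed

lemma power_bound_if_inverse_spt_delta_m1:
  assumes "0 < \<rho>" "is_inverse_l2rho \<rho> A B" "bounded_op_l2rho \<rho> sc B"
    "\<forall>x. spt (B (delta_m1 x)) \<subseteq> {0..}"
  shows "\<exists>M s. 0 \<le> s \<and> s < \<rho> \<and> (\<forall>n x. norm ((A ^^ n) x) \<le> M * s ^ n * norm x)"
proof -
  obtain K where "0 \<le> K" "\<And>N x. (\<Sum>n<N. (norm ((A ^^ n) x) / \<rho> ^ n)\<^sup>2) \<le> K * (norm x)\<^sup>2"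
    using orbits_square_summable_if_inverse[where A = A, OF assms(1) A_zero assms(2-4)] by blast
  then show ?thesis by (rule funpow_bound_of_square_summable_orbits[OF assms(1)])
qed

lemma causal_inverse_if_power_bound:
  assumes "0 < \<rho>" "0 \<le> s" "s < \<rho>" and bound: "\<And>n x. norm ((A ^^ n) x) \<le> M * s ^ n * norm x"
  shows "\<exists>B. is_inverse_l2rho \<rho> A B \<and> bounded_op_l2rho \<rho> sc B \<and> causal_l2rho \<rho> B"
proof -
  have "norm ((A ^^ n) x) \<le> max M 0 * s ^ n * norm x" for n x
    using bound[of n x] \<open>0 \<le> s\<close> mult_right_mono[of M "max M 0" "s ^ n * norm x"]
    by (simp add: mult.assoc)
  then interpret power_bounded sc ip A \<rho> "max M 0" s
    using assms by unfold_locales auto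
  show ?thesis using causal_inverse_is_bounded_causal_inverse by blast
qed

end

theorem theorem3p7:
  fixes \<rho> :: real
    and sc :: "complex \<Rightarrow> 'a::banach \<Rightarrow> 'a"
    and ip :: "'a \<Rightarrow> 'a \<Rightarrow> complex"
    and A :: "'a \<Rightarrow> 'a"
  assumes H: "complex_hilbert sc ip"
    and sep: "separable_space TYPE('a)"
    and rho: "\<rho> > 0"
    and A: "bounded_clinear_op sc A"
  shows "((\<exists>B. is_inverse_l2rho \<rho> A B \<and> bounded_op_l2rho \<rho> sc B \<and> causal_l2rho \<rho> B)
            \<longleftrightarrow> (\<exists>B. is_inverse_l2rho \<rho> A B \<and> bounded_op_l2rho \<rho> sc B \<and>
                     (\<forall>x. spt (B (delta_m1 x)) \<subseteq> {0..})))
       \<and> ((\<exists>B. is_inverse_l2rho \<rho> A B \<and> bounded_op_l2rho \<rho> sc B \<and>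
                     (\<forall>x. spt (B (delta_m1 x)) \<subseteq> {0..}))
            \<longleftrightarrow> ereal \<rho> > spectral_radius sc A)"
proof -
  interpret hilbert_operator sc ip A
    using H A by unfold_locales
  let ?i = "\<exists>B. is_inverse_l2rho \<rho> A B \<and> bounded_op_l2rho \<rho> sc B \<and> causal_l2rho \<rho> B"
  let ?ii = "\<exists>B. is_inverse_l2rho \<rho> A B \<and> bounded_op_l2rho \<rho> sc B \<and> (\<forall>x. spt (B (delta_m1 x)) \<subseteq> {0..})"
  let ?bound = "\<exists>M s. 0 \<le> s \<and> s < \<rho> \<and> (\<forall>n x. norm ((A ^^ n) x) \<le> M * s ^ n * norm x)"
  have i_ii: ?ii if ?i
  proof -
    from that obtain B where B: "is_inverse_l2rho \<rho> A B" "bounded_op_l2rho \<rho> sc B" "causal_l2rho \<rho> B"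
      by blast
    with spt_inverse_delta_m1_if_causal[where A = A, OF rho A_zero B(1,3)] show ?ii by blast
  qed
  have ii_bound: ?bound if ?ii
    using that power_bound_if_inverse_spt_delta_m1[OF rho] by blast
  have bound_i: ?i if ?bound
    using that causal_inverse_if_power_bound[OF rho] by blast
  show ?thesis
    using i_ii ii_bound bound_i spectral_radius_less_iff_power_bound[OF rho] by argo
qed

end
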